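(* For all positive integers $m,n$, \[ \overline{ {m+n \brack n }}_{q,t} = { m+n \brack n }_{q}\; {}_{2}\phi_{1} ( q^{-n}, q^{-m} ; q^{-n-m} ; q, -tq). \]
   Context: An overpartition is a partition in which the last occurrence of each distinct part size may be overlined; its weight $|\lambda|$ is the sum of its parts. $\overline{{m+n \brack n}}_{q,t}=\sum_{\lambda} t^{\#_o(\lambda)} q^{|\lambda|}$, the sum over all overpartitions $\lambda$ with largest part at most $m$ and at most $n$ parts, $\#_o(\lambda)$ being the number of overlined parts. ${m+n \brack n}_q=\frac{(q;q)_{m+n}}{(q;q)_m(q;q)_n}$ is the Gaussian polynomial, with $(a;q)_k=\prod_{j=1}^k(1-aq^{j-1})$. The basic hypergeometric series is ${}_{2}\phi_{1}(a_1,a_2;b_1;q,z)=\sum_{k\ge0}\frac{(a_1;q)_k(a_2;q)_k}{(q;q)_k(b_1;q)_k}z^k$ (here terminating, since $(q^{-n};q)_k=0$ for $k>n$). *)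

theory Defs
  imports Complex_Main
begin

text \<open>An overpartition is encoded in frequency notation: \<open>c j\<close> is the number of
  parts equal to \<open>j\<close> (parts are positive integers), and \<open>S\<close> is the set of part sizes
  whose last occurrence is overlined (so \<open>S\<close> is a subset of the occurring part sizes).\<close>

definition overpartitions_bounded :: "nat \<Rightarrow> nat \<Rightarrow> ((nat \<Rightarrow> nat) \<times> nat set) set" where
  "overpartitions_bounded m n =
     {(c, S). (\<forall>j. c j \<noteq> 0 \<longrightarrow> 1 \<le> j \<and> j \<le> m)
            \<and> (\<Sum>j\<in>{j. c j \<noteq> 0}. c j) \<le> n
            \<and> S \<subseteq> {j. c j \<noteq> 0}}"

definition op_weight :: "(nat \<Rightarrow> nat) \<Rightarrow> nat" where
  "op_weight c = (\<Sum>j\<in>{j. c j \<noteq> 0}. j * c j)"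

definition over_gauss :: "nat \<Rightarrow> nat \<Rightarrow> complex \<Rightarrow> complex \<Rightarrow> complex" where
  "over_gauss m n q t =
     (\<Sum>p\<in>overpartitions_bounded m n. t ^ card (snd p) * q ^ op_weight (fst p))"

definition qpoch :: "complex \<Rightarrow> complex \<Rightarrow> nat \<Rightarrow> complex" where
  "qpoch a q k = (\<Prod>j<k. (1 - a * q ^ j))"

definition gauss_binom :: "nat \<Rightarrow> nat \<Rightarrow> complex \<Rightarrow> complex" where
  "gauss_binom N k q = qpoch q q N / (qpoch q q (N - k) * qpoch q q k)"

definition phi21 :: "complex \<Rightarrow> complex \<Rightarrow> complex \<Rightarrow> complex \<Rightarrow> complex \<Rightarrow> complex" where
  "phi21 a1 a2 b1 q z =
     (\<Sum>k. qpoch a1 q k * qpoch a2 q k / (qpoch q q k * qpoch b1 q k) * z ^ k)"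

end

theory Submission
  imports Defs
begin

text \<open>Recording an overpartition by the multiplicities of its part sizes, the free choice of
  which distinct part sizes are overlined contributes \<open>(1 + t) ^ (number of distinct parts)\<close>.
  Splitting off the multiplicity of the largest admissible part \<open>m + 1\<close> shows that the resulting
  generating function \<open>G m n\<close> satisfies
  \<open>G (m+1) (n+1) = G m (n+1) + q^(m+1) G (m+1) n + t q^(m+1) G m n\<close> with \<open>G 0 n = G m 0 = 1\<close>.
  By the two q-Pascal rules the sum \<open>\<Sum>k. t^k q^(k(k+1)/2) [m, k] [m+n-k, n-k]\<close> satisfies the
  same recurrence, so the two agree. Finally, since
  \<open>(q^-a; q)_k = (-1)^k q^(k(k-1)/2 - a k) (q; q)_a / (q; q)_(a-k)\<close>,
  the \<open>k\<close>-th term of this sum is the \<open>k\<close>-th term of the terminating \<open>\<^sub>2\<phi>\<^sub>1\<close> series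
  multiplied by \<open>[m+n, n]\<close>.\<close>

lemma sum_Pow_power_card:
  fixes t :: "'a::comm_semiring_1"
  assumes "finite A"
  shows "(\<Sum>S\<in>Pow A. t ^ card S) = (1 + t) ^ card A"
  using prod_add[OF assms, of "\<lambda>_. t" "\<lambda>_. 1"] by (simp add: add.commute)

definition part_sizes :: "(nat \<Rightarrow> nat) \<Rightarrow> nat set" where
  "part_sizes c = {j. c j \<noteq> 0}"

definition bounded_freqs :: "nat \<Rightarrow> nat \<Rightarrow> (nat \<Rightarrow> nat) set" where
  "bounded_freqs m n = {c. part_sizes c \<subseteq> {1..m} \<and> (\<Sum>j\<in>part_sizes c. c j) \<le> n}"

definition freq_weight :: "complex \<Rightarrow> complex \<Rightarrow> (nat \<Rightarrow> nat) \<Rightarrow> complex" where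
  "freq_weight q t c = (1 + t) ^ card (part_sizes c) * q ^ op_weight c"

definition freq_gf :: "complex \<Rightarrow> complex \<Rightarrow> nat \<Rightarrow> nat \<Rightarrow> complex" where
  "freq_gf q t m n = (\<Sum>c\<in>bounded_freqs m n. freq_weight q t c)"

lemma op_weight_eq: "op_weight c = (\<Sum>j\<in>part_sizes c. j * c j)"
  by (simp add: op_weight_def part_sizes_def)

lemma finite_part_sizes_bounded_freqs: "c \<in> bounded_freqs m n \<Longrightarrow> finite (part_sizes c)"
  unfolding bounded_freqs_def using finite_subset by blast

lemma bounded_freqs_vanish: "c \<in> bounded_freqs m n \<Longrightarrow> m < j \<Longrightarrow> c j = 0"
  by (auto simp: bounded_freqs_def part_sizes_def)

lemma bounded_freqs_le:
  assumes "c \<in> bounded_freqs m n"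
  shows "c j \<le> n"
proof (cases "j \<in> part_sizes c")
  case True
  then have "c j \<le> (\<Sum>i\<in>part_sizes c. c i)"
    using finite_part_sizes_bounded_freqs[OF assms] by (intro member_le_sum) auto
  then show ?thesis using assms by (auto simp: bounded_freqs_def)
qed (simp add: part_sizes_def)

lemma finite_bounded_freqs: "finite (bounded_freqs m n)"
proof (rule finite_subset)
  show "bounded_freqs m n \<subseteq> {c. \<forall>j. (j \<in> {1..m} \<longrightarrow> c j \<in> {..n}) \<and> (j \<notin> {1..m} \<longrightarrow> c j = 0)}"
    using bounded_freqs_le by (auto simp: bounded_freqs_def part_sizes_def)
qed (rule finite_set_of_finite_funs; simp)

lemma over_gauss_eq_freq_gf: "over_gauss m n q t = freq_gf q t m n"
proof -
  have "overpartitions_bounded m n = (SIGMA c:bounded_freqs m n. Pow (part_sizes c))"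
    by (auto simp: overpartitions_bounded_def bounded_freqs_def part_sizes_def)
  then have "over_gauss m n q t =
      (\<Sum>c\<in>bounded_freqs m n. \<Sum>S\<in>Pow (part_sizes c). t ^ card S * q ^ op_weight c)"
    unfolding over_gauss_def
    using sum.Sigma[of "bounded_freqs m n" "\<lambda>c. Pow (part_sizes c)" "\<lambda>c S. t ^ card S * q ^ op_weight c"]
      finite_bounded_freqs finite_part_sizes_bounded_freqs by (simp add: split_def)
  also have "\<dots> = freq_gf q t m n"
    unfolding freq_gf_def freq_weight_def
    by (intro sum.cong refl)
      (simp add: sum_Pow_power_card finite_part_sizes_bounded_freqs flip: sum_distrib_right)
  finally show ?thesis .
qed

lemma part_sizes_fun_upd:
  "c M = 0 \<Longrightarrow> part_sizes (c(M := a)) = (if a = 0 then part_sizes c else insert M (part_sizes c))"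
  by (auto simp: part_sizes_def)

lemma sum_part_sizes_fun_upd:
  assumes "finite (part_sizes c)" and "c M = 0"
  shows "(\<Sum>j\<in>part_sizes (c(M := a)). f j * (c(M := a)) j) = (\<Sum>j\<in>part_sizes c. f j * c j) + f M * a"
proof (cases "a = 0")
  case True
  then have "c(M := a) = c" using assms(2) by auto
  then show ?thesis using True by simp
next
  case False
  have "(\<Sum>j\<in>part_sizes c. f j * (c(M := a)) j) = (\<Sum>j\<in>part_sizes c. f j * c j)"
    using assms(2) by (intro sum.cong) (auto simp: part_sizes_def)
  moreover have "M \<notin> part_sizes c" using assms(2) by (simp add: part_sizes_def)
  ultimately show ?thesis
    using assms False by (simp add: part_sizes_fun_upd)
qed

lemma freq_weight_fun_upd:
  assumes "finite (part_sizes c)" and "c M = 0"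
  shows "freq_weight q t (c(M := a)) = (if a = 0 then 1 else 1 + t) * q ^ (M * a) * freq_weight q t c"
proof -
  have "op_weight (c(M := a)) = op_weight c + M * a"
    using sum_part_sizes_fun_upd[OF assms, of "\<lambda>j. j" a] by (simp add: op_weight_eq)
  moreover have "M \<notin> part_sizes c" using assms(2) by (simp add: part_sizes_def)
  then have "card (part_sizes (c(M := a))) = card (part_sizes c) + (if a = 0 then 0 else 1)"
    using assms by (simp add: part_sizes_fun_upd)
  ultimately show ?thesis by (simp add: freq_weight_def power_add)
qed

lemma bij_betw_bounded_freqs_Suc:
  "bij_betw (\<lambda>(a, c). c(Suc m := a))
     (SIGMA a:{..n}. bounded_freqs m (n - a)) (bounded_freqs (Suc m) n)"
proof (rule bij_betw_byWitness[where f' = "\<lambda>c. (c (Suc m), c(Suc m := 0))"])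
  have count: "(\<Sum>j\<in>part_sizes (c(Suc m := a)). (c(Suc m := a)) j) = (\<Sum>j\<in>part_sizes c. c j) + a"
    if "finite (part_sizes c)" "c (Suc m) = 0" for c a
    using sum_part_sizes_fun_upd[OF that, of "\<lambda>_. 1" a] by simp
  show "(\<lambda>(a, c). c(Suc m := a)) ` (SIGMA a:{..n}. bounded_freqs m (n - a)) \<subseteq> bounded_freqs (Suc m) n"
  proof clarify
    fix a c assume "a \<le> n" and c: "c \<in> bounded_freqs m (n - a)"
    moreover have "c (Suc m) = 0" using c by (simp add: bounded_freqs_vanish)
    ultimately show "c(Suc m := a) \<in> bounded_freqs (Suc m) n"
      using count[OF finite_part_sizes_bounded_freqs[OF c]]
      by (auto simp: bounded_freqs_def part_sizes_fun_upd)
  qed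
  show "(\<lambda>c. (c (Suc m), c(Suc m := 0))) ` bounded_freqs (Suc m) n \<subseteq> (SIGMA a:{..n}. bounded_freqs m (n - a))"
  proof clarify
    fix c assume c: "c \<in> bounded_freqs (Suc m) n"
    have "finite (part_sizes (c(Suc m := 0)))"
      using finite_part_sizes_bounded_freqs[OF c] by (rule finite_subset[rotated]) (auto simp: part_sizes_def)
    then have "(\<Sum>j\<in>part_sizes c. c j) = (\<Sum>j\<in>part_sizes (c(Suc m := 0)). (c(Suc m := 0)) j) + c (Suc m)"
      using count[of "c(Suc m := 0)" "c (Suc m)"] by simp
    moreover have "part_sizes (c(Suc m := 0)) \<subseteq> {1..m}"
      using c by (auto simp: bounded_freqs_def part_sizes_def le_Suc_eq)
    ultimately show "c (Suc m) \<in> {..n} \<and> c(Suc m := 0) \<in> bounded_freqs m (n - c (Suc m))"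
      using c bounded_freqs_le[OF c] by (auto simp: bounded_freqs_def)
  qed
qed (auto simp: bounded_freqs_vanish)

lemma freq_gf_Suc_left:
  "freq_gf q t (Suc m) n =
    (\<Sum>a\<le>n. (if a = 0 then 1 else 1 + t) * q ^ (Suc m * a) * freq_gf q t m (n - a))"
proof -
  have "freq_gf q t (Suc m) n =
      (\<Sum>(a, c)\<in>(SIGMA a:{..n}. bounded_freqs m (n - a)). freq_weight q t (c(Suc m := a)))"
    unfolding freq_gf_def
    by (subst sum.reindex_bij_betw[OF bij_betw_bounded_freqs_Suc, symmetric]) (simp add: split_def)
  also have "\<dots> = (\<Sum>a\<le>n. \<Sum>c\<in>bounded_freqs m (n - a). freq_weight q t (c(Suc m := a)))"
    by (rule sum.Sigma[symmetric]) (auto simp: finite_bounded_freqs)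
  also have "\<dots> = (\<Sum>a\<le>n. (if a = 0 then 1 else 1 + t) * q ^ (Suc m * a) * freq_gf q t m (n - a))"
    unfolding freq_gf_def sum_distrib_left
    by (intro sum.cong refl freq_weight_fun_upd finite_part_sizes_bounded_freqs bounded_freqs_vanish)
      auto
  finally show ?thesis .
qed

lemma freq_gf_0_left: "freq_gf q t 0 n = 1"
proof -
  have "bounded_freqs 0 n = {\<lambda>_. 0}"
    by (auto simp: bounded_freqs_def part_sizes_def)
  then show ?thesis by (simp add: freq_gf_def freq_weight_def op_weight_def part_sizes_def)
qed

lemma freq_gf_0_right: "freq_gf q t m 0 = 1"
proof -
  have "bounded_freqs m 0 = {\<lambda>_. 0}"
    using bounded_freqs_le[where n = 0] by (auto simp: bounded_freqs_def part_sizes_def)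
  then show ?thesis by (simp add: freq_gf_def freq_weight_def op_weight_def part_sizes_def)
qed

lemma freq_gf_Suc_Suc:
  "freq_gf q t (Suc m) (Suc n) =
    freq_gf q t m (Suc n) + q ^ Suc m * freq_gf q t (Suc m) n + t * q ^ Suc m * freq_gf q t m n"
proof -
  let ?w = "\<lambda>a::nat. if a = 0 then 1 else 1 + t" and ?F = "freq_gf q t m"
  have "freq_gf q t (Suc m) (Suc n) =
      ?F (Suc n) + (\<Sum>a\<le>n. ?w (Suc a) * q ^ (Suc m * Suc a) * ?F (n - a))"
    unfolding freq_gf_Suc_left[of q t m "Suc n"] sum.atMost_Suc_shift by simp
  also have "(\<Sum>a\<le>n. ?w (Suc a) * q ^ (Suc m * Suc a) * ?F (n - a)) =
      (\<Sum>a\<le>n. ?w a * q ^ (Suc m * Suc a) * ?F (n - a)) + t * q ^ Suc m * ?F n"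
  proof -
    have "?w (Suc a) * q ^ (Suc m * Suc a) * ?F (n - a) =
        ?w a * q ^ (Suc m * Suc a) * ?F (n - a) + (if a = 0 then t * q ^ Suc m * ?F n else 0)" for a
      by (simp add: algebra_simps)
    then show ?thesis by (simp add: sum.distrib)
  qed
  also have "(\<Sum>a\<le>n. ?w a * q ^ (Suc m * Suc a) * ?F (n - a)) = q ^ Suc m * freq_gf q t (Suc m) n"
    by (simp add: freq_gf_Suc_left sum_distrib_left power_add mult_ac)
  finally show ?thesis by (simp add: algebra_simps)
qed

text \<open>The Gaussian binomial as a polynomial in \<open>q\<close>, via q-Pascal recursion: unlike
  \<open>gauss_binom\<close> it involves no division, so it is meaningful at roots of unity.\<close>

fun qbinom :: "'a::comm_semiring_1 \<Rightarrow> nat \<Rightarrow> nat \<Rightarrow> 'a" where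
  "qbinom q a 0 = 1"
| "qbinom q 0 (Suc b) = 0"
| "qbinom q (Suc a) (Suc b) = qbinom q a (Suc b) + q ^ (a - b) * qbinom q a b"

lemma qbinom_eq_0: "a < b \<Longrightarrow> qbinom q a b = 0"
proof (induction a arbitrary: b)
  case 0 then show ?case by (cases b) auto
next
  case (Suc a) then show ?case by (cases b) auto
qed

lemma qbinom_same [simp]: "qbinom q a a = 1"
  by (induction a) (auto simp: qbinom_eq_0)

lemma qpoch_Suc: "qpoch a q (Suc k) = qpoch a q k * (1 - a * q ^ k)"
  by (simp add: qpoch_def)

lemma qbinom_add_qpoch:
  "qbinom q (a + b) b * qpoch q q a * qpoch q q b = qpoch q q (a + b)"
proof (induction b arbitrary: a)
  case 0 then show ?case by (simp add: qpoch_def)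
next
  case (Suc b)
  show ?case
  proof (induction a)
    case 0 then show ?case by (simp add: qpoch_def)
  next
    case (Suc a)
    let ?x = "Suc a + b" and ?D = "qpoch q q"
    have IH1: "qbinom q (a + Suc b) (Suc b) * ?D a * ?D (Suc b) = ?D (a + Suc b)" by fact
    have IH2: "qbinom q ?x b * ?D (Suc a) * ?D b = ?D ?x" by fact
    have "qbinom q (Suc a + Suc b) (Suc b) * ?D (Suc a) * ?D (Suc b)
        = (1 - q ^ Suc a) * (qbinom q (a + Suc b) (Suc b) * ?D a * ?D (Suc b))
          + q ^ Suc a * (1 - q ^ Suc b) * (qbinom q ?x b * ?D (Suc a) * ?D b)"
      by (simp add: qpoch_Suc algebra_simps)
    also have "\<dots> = ?D ?x * (1 - q ^ Suc a * q ^ Suc b)"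
      unfolding IH1 IH2 by (simp add: algebra_simps)
    also have "\<dots> = ?D (Suc a + Suc b)"
      by (simp add: qpoch_Suc power_add algebra_simps)
    finally show ?case .
  qed
qed

lemma qbinom_eq_qpoch_quotient:
  assumes "qpoch q q a \<noteq> 0" and "qpoch q q b \<noteq> 0"
  shows "qbinom q (a + b) b = qpoch q q (a + b) / (qpoch q q a * qpoch q q b)"
  using qbinom_add_qpoch[of q a b] assms by (simp add: field_simps)

lemma sum_qbinom_Suc_right:
  fixes f :: "nat \<Rightarrow> 'a::comm_semiring_1"
  shows "(\<Sum>k\<le>Suc n. f k * qbinom q (Suc m + (Suc n - k)) (Suc n - k)) =
    (\<Sum>k\<le>Suc n. f k * qbinom q (m + (Suc n - k)) (Suc n - k))
    + q ^ Suc m * (\<Sum>k\<le>n. f k * qbinom q (Suc m + (n - k)) (n - k))"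
proof -
  have "f k * qbinom q (Suc m + (Suc n - k)) (Suc n - k) =
      f k * qbinom q (m + (Suc n - k)) (Suc n - k) + q ^ Suc m * (f k * qbinom q (Suc m + (n - k)) (n - k))"
    if "k \<le> n" for k
    using that by (simp add: Suc_diff_le algebra_simps)
  then have "(\<Sum>k\<le>n. f k * qbinom q (Suc m + (Suc n - k)) (Suc n - k)) =
      (\<Sum>k\<le>n. f k * qbinom q (m + (Suc n - k)) (Suc n - k))
      + q ^ Suc m * (\<Sum>k\<le>n. f k * qbinom q (Suc m + (n - k)) (n - k))"
    by (simp add: sum.distrib sum_distrib_left)
  then show ?thesis by (simp add: algebra_simps)
qed

lemma sum_qbinom_Suc_left:
  fixes g :: "nat \<Rightarrow> 'a::comm_semiring_1"
  shows "(\<Sum>k\<le>Suc n. t ^ k * q ^ (Suc k choose 2) * qbinom q (Suc m) k * g (Suc n - k)) =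
    (\<Sum>k\<le>Suc n. t ^ k * q ^ (Suc k choose 2) * qbinom q m k * g (Suc n - k))
    + t * q ^ Suc m * (\<Sum>k\<le>n. t ^ k * q ^ (Suc k choose 2) * qbinom q m k * g (n - k))"
proof -
  have shift: "t ^ Suc k * q ^ (Suc (Suc k) choose 2) * (q ^ (m - k) * qbinom q m k) =
      t * q ^ Suc m * (t ^ k * q ^ (Suc k choose 2) * qbinom q m k)" for k
  proof (cases "k \<le> m")
    case True
    then have "(Suc (Suc k) choose 2) + (m - k) = (Suc k choose 2) + Suc m"
      by (simp add: numeral_2_eq_2)
    then have "q ^ (Suc (Suc k) choose 2) * q ^ (m - k) = q ^ (Suc k choose 2) * q ^ Suc m"
      by (metis power_add)
    then show ?thesis by (simp add: algebra_simps)
  next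
    case False then show ?thesis by (simp add: qbinom_eq_0)
  qed
  have "(\<Sum>k\<le>Suc n. t ^ k * q ^ (Suc k choose 2) * qbinom q (Suc m) k * g (Suc n - k)) =
      (\<Sum>k\<le>Suc n. t ^ k * q ^ (Suc k choose 2) * qbinom q m k * g (Suc n - k))
      + (\<Sum>k\<le>n. t ^ Suc k * q ^ (Suc (Suc k) choose 2) * (q ^ (m - k) * qbinom q m k) * g (n - k))"
    by (simp only: sum.atMost_Suc_shift qbinom.simps) (simp add: sum.distrib algebra_simps)
  then show ?thesis
    unfolding shift by (simp add: sum_distrib_left mult.assoc)
qed

definition over_gauss_expansion :: "'a::comm_semiring_1 \<Rightarrow> 'a \<Rightarrow> nat \<Rightarrow> nat \<Rightarrow> 'a" where
  "over_gauss_expansion q t m n =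
     (\<Sum>k\<le>n. t ^ k * q ^ (Suc k choose 2) * qbinom q m k * qbinom q (m + (n - k)) (n - k))"

lemma over_gauss_expansion_0_right: "over_gauss_expansion q t m 0 = 1"
  by (simp add: over_gauss_expansion_def numeral_2_eq_2)

lemma over_gauss_expansion_0_left: "over_gauss_expansion q t 0 n = 1"
  by (cases n) (simp_all add: over_gauss_expansion_def sum.atMost_Suc_shift numeral_2_eq_2 del: sum.atMost_Suc)

lemma over_gauss_expansion_Suc_Suc:
  "over_gauss_expansion q t (Suc m) (Suc n) =
    over_gauss_expansion q t m (Suc n) + q ^ Suc m * over_gauss_expansion q t (Suc m) n
    + t * q ^ Suc m * over_gauss_expansion q t m n"
proof -
  let ?f = "\<lambda>m k. t ^ k * q ^ (Suc k choose 2) * qbinom q m k"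
  have "over_gauss_expansion q t (Suc m) (Suc n) =
      (\<Sum>k\<le>Suc n. ?f (Suc m) k * qbinom q (m + (Suc n - k)) (Suc n - k))
      + q ^ Suc m * over_gauss_expansion q t (Suc m) n"
    unfolding over_gauss_expansion_def by (rule sum_qbinom_Suc_right)
  also have "(\<Sum>k\<le>Suc n. ?f (Suc m) k * qbinom q (m + (Suc n - k)) (Suc n - k)) =
      over_gauss_expansion q t m (Suc n) + t * q ^ Suc m * over_gauss_expansion q t m n"
    unfolding over_gauss_expansion_def
    by (rule sum_qbinom_Suc_left[where g = "\<lambda>j. qbinom q (m + j) j"])
  finally show ?thesis by (simp add: algebra_simps)
qed

lemma freq_gf_eq_over_gauss_expansion: "freq_gf q t m n = over_gauss_expansion q t m n"
proof (induction m arbitrary: n)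
  case 0
  then show ?case by (simp add: freq_gf_0_left over_gauss_expansion_0_left)
next
  case (Suc m)
  then show ?case
    by (induction n)
      (simp_all add: freq_gf_0_right over_gauss_expansion_0_right freq_gf_Suc_Suc over_gauss_expansion_Suc_Suc)
qed

lemma qpoch_qq_nonzero:
  assumes "k \<le> N" and "\<forall>j\<in>{1..N}. q ^ j \<noteq> 1"
  shows "qpoch q q k \<noteq> 0"
  using assms by (auto simp: qpoch_def simp flip: power_Suc)

lemma qpoch_inverse_power_eq_0:
  assumes "q \<noteq> 0" and "a < k"
  shows "qpoch (inverse (q ^ a)) q k = 0"
  using assms unfolding qpoch_def by (intro prod_zero bexI[of _ a]) auto

lemma qpoch_inverse_power:
  assumes "q \<noteq> 0" and "k \<le> a"
  shows "qpoch (inverse (q ^ a)) q k * q ^ (a * k) * qpoch q q (a - k) =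
    (-1) ^ k * q ^ (k choose 2) * qpoch q q a"
  using assms(2)
proof (induction k)
  case 0
  then show ?case by (simp add: qpoch_def numeral_2_eq_2)
next
  case (Suc k)
  have "q ^ a = q ^ k * q ^ (a - k)" and "a - k = Suc (a - Suc k)"
    using Suc.prems by (simp_all flip: power_add)
  then have step: "(1 - inverse (q ^ a) * q ^ k) * q ^ a * qpoch q q (a - Suc k) = - (q ^ k) * qpoch q q (a - k)"
    using assms(1) by (simp add: qpoch_Suc algebra_simps)
  have "qpoch (inverse (q ^ a)) q (Suc k) * q ^ (a * Suc k) * qpoch q q (a - Suc k) =
      qpoch (inverse (q ^ a)) q k * q ^ (a * k) * ((1 - inverse (q ^ a) * q ^ k) * q ^ a * qpoch q q (a - Suc k))"
    by (simp add: qpoch_Suc power_add mult_ac)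
  also have "\<dots> = - (q ^ k) * (qpoch (inverse (q ^ a)) q k * q ^ (a * k) * qpoch q q (a - k))"
    unfolding step by (simp add: mult_ac)
  also have "\<dots> = (-1) ^ Suc k * q ^ (Suc k choose 2) * qpoch q q a"
    using Suc by (simp add: numeral_2_eq_2 power_add)
  finally show ?case .
qed

lemma phi21_inverse_power:
  assumes "q \<noteq> 0"
  shows "phi21 (inverse (q ^ n)) a2 b1 q z =
    (\<Sum>k\<le>n. qpoch (inverse (q ^ n)) q k * qpoch a2 q k / (qpoch q q k * qpoch b1 q k) * z ^ k)"
  unfolding phi21_def
  by (rule suminf_finite) (auto simp: qpoch_inverse_power_eq_0[OF assms])

lemma qpoch_inverse_power_quotient:
  assumes "q \<noteq> 0" and "k \<le> a" and "qpoch q q (a - k) \<noteq> 0"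
  shows "qpoch (inverse (q ^ a)) q k =
    (-1) ^ k * q ^ (k choose 2) * qpoch q q a / (q ^ (a * k) * qpoch q q (a - k))"
  using qpoch_inverse_power[OF assms(1,2)] assms by (simp add: field_simps)

lemma gauss_binom_phi21_term:
  fixes q t :: complex
  assumes q: "q \<noteq> 0" and nz: "\<forall>j\<in>{1..m+n}. q ^ j \<noteq> 1" and "k \<le> n"
  shows "gauss_binom (m + n) n q *
      (qpoch (inverse (q ^ n)) q k * qpoch (inverse (q ^ m)) q k
        / (qpoch q q k * qpoch (inverse (q ^ (n + m))) q k) * (- t * q) ^ k)
    = t ^ k * q ^ (Suc k choose 2) * qbinom q m k * qbinom q (m + (n - k)) (n - k)"
proof (cases "k \<le> m")
  case False
  then show ?thesis using qpoch_inverse_power_eq_0[OF q, of m k] qbinom_eq_0[of m k q] by simp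
next
  case True
  let ?D = "qpoch q q"
  have D: "?D j \<noteq> 0" if "j \<le> m + n" for j
    using qpoch_qq_nonzero[OF that nz] .
  have "m - k + k = m" and "n + m - k = m + (n - k)"
    using True \<open>k \<le> n\<close> by simp_all
  then have qbinom_m: "qbinom q m k = ?D m / (?D (m - k) * ?D k)"
    and qbinom_mn: "qbinom q (m + (n - k)) (n - k) = ?D (m + (n - k)) / (?D m * ?D (n - k))"
    and inv_nm: "qpoch (inverse (q ^ (n + m))) q k =
      (-1) ^ k * q ^ (k choose 2) * ?D (m + n) / (q ^ ((n + m) * k) * ?D (m + (n - k)))"
    using qbinom_eq_qpoch_quotient[of q "m - k" k] qbinom_eq_qpoch_quotient[of q m "n - k"]
      qpoch_inverse_power_quotient[OF q, of k "n + m"] True \<open>k \<le> n\<close> D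
    by (simp_all add: add.commute)
  have inv_n: "qpoch (inverse (q ^ n)) q k =
      (-1) ^ k * q ^ (k choose 2) * ?D n / (q ^ (n * k) * ?D (n - k))"
    and inv_m: "qpoch (inverse (q ^ m)) q k =
      (-1) ^ k * q ^ (k choose 2) * ?D m / (q ^ (m * k) * ?D (m - k))"
    using qpoch_inverse_power_quotient[OF q] True \<open>k \<le> n\<close> D by simp_all
  have gauss: "gauss_binom (m + n) n q = ?D (m + n) / (?D m * ?D n)"
    by (simp add: gauss_binom_def mult.commute)
  have powers: "q ^ (Suc k choose 2) = q ^ (k choose 2) * q ^ k"
    "q ^ ((n + m) * k) = q ^ (n * k) * q ^ (m * k)"
    "(- t * q) ^ k = (-1) ^ k * t ^ k * q ^ k"
    by (simp_all add: numeral_2_eq_2 power_add add_mult_distrib power_mult_distrib power_minus[of "t * q"])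
  show ?thesis
    unfolding qbinom_m qbinom_mn inv_nm inv_n inv_m gauss powers
    using True \<open>k \<le> n\<close> q D[of k] D[of n] D[of m] D[of "m + n"] D[of "m + (n - k)"] D[of "n - k"] D[of "m - k"]
    by (simp add: field_simps)
qed

theorem proposition2p4:
  fixes m n :: nat and q t :: complex
  assumes "m \<ge> 1" and "n \<ge> 1"
    and "q \<noteq> 0" and "\<forall>j\<in>{1..m+n}. q ^ j \<noteq> 1"
  shows "over_gauss m n q t =
         gauss_binom (m + n) n q *
         phi21 (q powi (- int n)) (q powi (- int m)) (q powi (- int n - int m)) q (- t * q)"
proof -
  have "- int n - int m = - int (n + m)" by simp
  then have "q powi (- int n - int m) = inverse (q ^ (n + m))"
    by (simp only: power_int_minus power_int_of_nat)
  then have "gauss_binom (m + n) n q *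
      phi21 (q powi (- int n)) (q powi (- int m)) (q powi (- int n - int m)) q (- t * q) =
      (\<Sum>k\<le>n. t ^ k * q ^ (Suc k choose 2) * qbinom q m k * qbinom q (m + (n - k)) (n - k))"
    using gauss_binom_phi21_term[OF assms(3,4)]
    by (simp add: power_int_minus phi21_inverse_power[OF assms(3)] sum_distrib_left)
  also have "\<dots> = over_gauss m n q t"
    by (simp add: over_gauss_eq_freq_gf freq_gf_eq_over_gauss_expansion over_gauss_expansion_def)
  finally show ?thesis ..
qed

end
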